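(* Let $\kappa$ be a regular cardinal. A $\kappa$-Kurepa tree exists if and only if there exists a $(\kappa,\kappa)$-connected graph of size $\kappa$ which has a $\kappa$-Kurepa minor family of size at least $\kappa^+$.
   Context: A tree is a poset in which the set of predecessors of each element is well-ordered; the $\alpha$-th level is the set of nodes whose set of predecessors has order type $\alpha$, and the height of the tree is the least $\alpha$ with empty $\alpha$-th level. A branch is a maximal chain. A $\kappa$-Kurepa tree is a tree of height $\kappa$ with at least $\kappa^+$ different branches (of length $\kappa$) and all levels of size less than $\kappa$. A graph is a pair $(V,E)$ with $E\subseteq[V]^2$; its size is $|V|$. For infinite cardinals $\kappa,\lambda$, a graph is $(\kappa,\lambda)$-connected if after the removal of any set of fewer than $\kappa$ vertices, the number of connected components of the remaining graph is non-zero and less than $\lambda$. A $K_\kappa$ minor of $G$ is a family of $\kappa$ pairwise disjoint non-empty vertex sets of $G$, each inducing a connected subgraph, such that any two of them are joined by an edge of $G$; we identify it with the union of its sets when speaking about separation. For vertex sets $X,Y,S$, $S$ separates $X$ from $Y$ in $G$ if after removing $S$, $X\setminus S$ and $Y\setminus S$ lie in different components. A family $\{W_\alpha:\alpha<\lambda\}$ of $K_\kappa$ minors of $G$ is a $\kappa$-Kurepa minor family of size $\lambda$ if for all $\alpha\neq\beta$ some set of fewer than $\kappa$ vertices separates $W_\alpha$ from $W_\beta$ in $G$. *)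

theory Defs
  imports Main
begin

unbundle cardinal_syntax

(* Cardinals are represented, as in HOL's BNF cardinal library, by cardinal
   orders r (Card_order r); the ordinal alpha < kappa are represented by the
   initial segments Restr r (underS r a), a : Field r. *)

definition tree_pred :: "'a set \<Rightarrow> 'a rel \<Rightarrow> 'a \<Rightarrow> 'a set" where
  "tree_pred T le t = {s \<in> T. (s, t) \<in> le \<and> s \<noteq> t}"

definition is_tree :: "'a set \<Rightarrow> 'a rel \<Rightarrow> bool" where
  "is_tree T le \<longleftrightarrow> le \<subseteq> T \<times> T \<and> refl_on T le \<and> antisym le \<and> trans le \<and>
     (\<forall>t\<in>T. well_order_on (tree_pred T le t) (Restr le (tree_pred T le t)))"

definition tree_level :: "'a set \<Rightarrow> 'a rel \<Rightarrow> 'b rel \<Rightarrow> 'a set" where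
  "tree_level T le w = {t \<in> T. Restr le (tree_pred T le t) =o w}"

definition tree_height_is :: "'a set \<Rightarrow> 'a rel \<Rightarrow> 'b rel \<Rightarrow> bool" where
  "tree_height_is T le r \<longleftrightarrow>
     (\<forall>a\<in>Field r. tree_level T le (Restr r (underS r a)) \<noteq> {}) \<and> tree_level T le r = {}"

definition is_chain :: "'a set \<Rightarrow> 'a rel \<Rightarrow> 'a set \<Rightarrow> bool" where
  "is_chain T le C \<longleftrightarrow> C \<subseteq> T \<and> (\<forall>x\<in>C. \<forall>y\<in>C. (x, y) \<in> le \<or> (y, x) \<in> le)"

definition is_branch :: "'a set \<Rightarrow> 'a rel \<Rightarrow> 'a set \<Rightarrow> bool" where
  "is_branch T le B \<longleftrightarrow> is_chain T le B \<and> (\<forall>C. is_chain T le C \<and> B \<subseteq> C \<longrightarrow> C = B)"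

definition kurepa_tree :: "'b rel \<Rightarrow> 'a set \<Rightarrow> 'a rel \<Rightarrow> bool" where
  "kurepa_tree r T le \<longleftrightarrow> is_tree T le \<and> tree_height_is T le r \<and>
     (\<forall>a\<in>Field r. |tree_level T le (Restr r (underS r a))| <o r) \<and>
     cardSuc r \<le>o |{B. is_branch T le B \<and> Restr le B =o r}|"

definition is_graph :: "'a set \<Rightarrow> 'a set set \<Rightarrow> bool" where
  "is_graph V E \<longleftrightarrow> (\<forall>e\<in>E. e \<subseteq> V \<and> card e = 2)"

definition adj :: "'a set set \<Rightarrow> 'a rel" where
  "adj E = {(x, y). {x, y} \<in> E}"

definition conn_in :: "'a set set \<Rightarrow> 'a set \<Rightarrow> 'a rel" where
  "conn_in E U = Restr ((Restr (adj E) U)\<^sup>*) U"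

definition components :: "'a set set \<Rightarrow> 'a set \<Rightarrow> 'a set set" where
  "components E U = U // conn_in E U"

definition induces_connected :: "'a set set \<Rightarrow> 'a set \<Rightarrow> bool" where
  "induces_connected E X \<longleftrightarrow> X \<noteq> {} \<and> (\<forall>x\<in>X. \<forall>y\<in>X. (x, y) \<in> conn_in E X)"

definition kl_connected :: "'b rel \<Rightarrow> 'c rel \<Rightarrow> 'a set \<Rightarrow> 'a set set \<Rightarrow> bool" where
  "kl_connected k l V E \<longleftrightarrow>
     (\<forall>S. S \<subseteq> V \<and> |S| <o k \<longrightarrow>
        components E (V - S) \<noteq> {} \<and> |components E (V - S)| <o l)"

(* a K_kappa minor, given as the family of its branch sets *)
definition K_minor :: "'b rel \<Rightarrow> 'a set \<Rightarrow> 'a set set \<Rightarrow> 'a set set \<Rightarrow> bool" where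
  "K_minor k V E M \<longleftrightarrow> |M| =o k \<and>
     (\<forall>A\<in>M. A \<subseteq> V \<and> induces_connected E A) \<and>
     (\<forall>A\<in>M. \<forall>B\<in>M. A \<noteq> B \<longrightarrow> A \<inter> B = {} \<and> (\<exists>x\<in>A. \<exists>y\<in>B. {x, y} \<in> E))"

definition separates :: "'a set \<Rightarrow> 'a set set \<Rightarrow> 'a set \<Rightarrow> 'a set \<Rightarrow> 'a set \<Rightarrow> bool" where
  "separates V E S X Y \<longleftrightarrow>
     (\<forall>x\<in>X - S. \<forall>y\<in>Y - S. (x, y) \<notin> conn_in E (V - S))"

definition kurepa_minor_family :: "'b rel \<Rightarrow> 'a set \<Rightarrow> 'a set set \<Rightarrow> 'a set set set \<Rightarrow> bool" where
  "kurepa_minor_family k V E F \<longleftrightarrow> (\<forall>M\<in>F. K_minor k V E M) \<and>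
     (\<forall>M\<in>F. \<forall>N\<in>F. M \<noteq> N \<longrightarrow>
        (\<exists>S. S \<subseteq> V \<and> |S| <o k \<and> separates V E S (\<Union>M) (\<Union>N)))"

end

theory Submission
  imports Defs
begin

text \<open>
  Given a \<kappa>-Kurepa tree, take the comparability graph on the union of its branches of
  length \<kappa>. The vertices of such a branch are pairwise adjacent, so its singletons form a
  K_\<kappa> minor. Two distinct branches are separated by their common part, which lies below a
  single node and so has fewer than \<kappa> elements. Fewer than \<kappa> removed vertices miss some
  level, and along its branch every remaining vertex is adjacent to that level, which has
  fewer than \<kappa> nodes.

  Conversely, enumerate the vertices in order type \<kappa> and let V_\<alpha> be the first \<alpha> of them.
  Fewer than \<kappa> branch sets of a K_\<kappa> minor W meet V_\<alpha>, and the others lie in a single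
  component C_W(\<alpha>) of G - V_\<alpha>. The pairs (\<alpha>, C_W(\<alpha>)), ordered by \<alpha> and reverse inclusion,
  form a tree whose levels are small by (\<kappa>,\<kappa>)-connectivity, and each W traces a branch of
  length \<kappa>. By regularity a small separator of W and W' lies inside some V_\<alpha>, so distinct
  minors trace distinct branches.
\<close>

section \<open>Initial segments of well-orders\<close>

lemma Field_Restr_underS:
  assumes "Well_order r" shows "Field (Restr r (underS r a)) = underS r a"
proof -
  have "Refl r" using assms unfolding order_on_defs by auto
  then show ?thesis by (rule Refl_Field_Restr2[OF _ Order_Relation.underS_Field])
qed

lemma Restr_underS_ordLess:
  assumes W: "Well_order r" and c: "c \<in> underS r c'"
  shows "Restr r (underS r c) <o Restr r (underS r c')"
proof -
  let ?w = "Restr r (underS r c')"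
  have "trans r" "antisym r" using W unfolding order_on_defs by auto
  moreover have "(c, c') \<in> r" using c unfolding underS_def by auto
  ultimately have sub: "underS r c \<subseteq> underS r c'" by (rule underS_incr)
  have "Restr ?w (underS ?w c) <o ?w"
  proof (rule underS_Restr_ordLess[OF Well_order_Restr[OF W]])
    show "Field ?w \<noteq> {}" using Field_Restr_underS[OF W] c by auto
  qed
  moreover have "Restr ?w (underS ?w c) = Restr r (underS r c)"
    using c sub unfolding underS_def by auto
  ultimately show ?thesis by simp
qed

lemma Restr_underS_ordIso_imp_eq:
  assumes W: "Well_order r" and c: "c \<in> Field r" "c' \<in> Field r"
    and iso: "Restr r (underS r c) =o Restr r (underS r c')"
  shows "c = c'"
proof (rule ccontr)
  assume "c \<noteq> c'"
  moreover have "total_on (Field r) r" using W unfolding order_on_defs by auto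
  ultimately have "c \<in> underS r c' \<or> c' \<in> underS r c"
    using c unfolding underS_def total_on_def by blast
  moreover have "\<not> Restr r (underS r c) <o Restr r (underS r c')"
    using iso not_ordLess_ordIso by blast
  moreover have "\<not> Restr r (underS r c') <o Restr r (underS r c)"
    using ordIso_symmetric[OF iso] not_ordLess_ordIso by blast
  ultimately show False using Restr_underS_ordLess[OF W] by blast
qed

lemma card_of_ordLeq_Field_if_ordLess:
  assumes "Card_order r" "|A| <o r" shows "|A| \<le>o |Field r|"
  using ordLess_imp_ordLeq[OF ordLess_ordIso_trans[OF assms(2)
        ordIso_symmetric[OF card_of_Field_ordIso[OF assms(1)]]]] .

lemma nonempty_if_cardSuc_ordLeq:
  assumes C: "Card_order r" and A: "cardSuc r \<le>o |A|" shows "A \<noteq> {}"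
proof
  assume "A = {}"
  then have "|A| \<le>o r" using ordLeq_ordIso_trans[OF card_of_empty card_of_Field_ordIso[OF C]] by simp
  then have "cardSuc r \<le>o r" using ordLeq_transitive[OF A] by blast
  then show False using cardSuc_greater[OF C] not_ordLess_ordLeq by blast
qed

lemma regularCard_small_set_bounded:
  assumes C: "Card_order r" and inf: "infinite (Field r)" and reg: "regularCard r"
    and K: "K \<subseteq> Field r" "|K| <o r"
  shows "\<exists>\<alpha>\<in>Field r. K \<subseteq> underS r \<alpha>"
proof -
  have W: "Well_order r" using card_order_on_well_order_on C by blast
  have "\<not> cofinal K r" using reg K not_ordLess_ordIso unfolding regularCard_def by blast
  then obtain a where a: "a \<in> Field r" "\<forall>b\<in>K. a = b \<or> (a, b) \<notin> r" unfolding cofinal_def by blast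
  obtain \<alpha> where \<alpha>: "\<alpha> \<in> Field r" "a \<noteq> \<alpha>" "(a, \<alpha>) \<in> r"
    using infinite_Card_order_limit[OF C inf a(1)] by blast
  have "k \<in> underS r \<alpha>" if k: "k \<in> K" for k
  proof (cases "k = a")
    case True
    then show ?thesis using \<alpha> unfolding underS_def by auto
  next
    case False
    have r: "trans r" "antisym r" "total_on (Field r) r" using W unfolding order_on_defs by auto
    have "(a, k) \<notin> r" using a(2) k False by auto
    then have "(k, a) \<in> r" using r(3) k K(1) a(1) False unfolding total_on_def by blast
    then have "(k, \<alpha>) \<in> r" using \<alpha>(3) r(1) unfolding trans_def by blast
    moreover have "k \<noteq> \<alpha>" using \<open>(a, k) \<notin> r\<close> \<alpha>(3) by auto
    ultimately show ?thesis unfolding underS_def by auto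
  qed
  then show ?thesis using \<alpha>(1) by blast
qed

section \<open>Trees\<close>

lemma is_treeD:
  assumes "is_tree T le"
  shows "le \<subseteq> T \<times> T" "refl_on T le" "antisym le" "trans le"
  using assms unfolding is_tree_def by auto

lemma Well_order_tree_pred:
  assumes "is_tree T le" "t \<in> T"
  shows "Well_order (Restr le (tree_pred T le t))"
    and "Field (Restr le (tree_pred T le t)) = tree_pred T le t"
  using assms well_order_on_Well_order unfolding is_tree_def by blast+

lemma tree_le_below_comparable:
  assumes tr: "is_tree T le" and "(a, v) \<in> le" "(b, v) \<in> le"
  shows "(a, b) \<in> le \<or> (b, a) \<in> le"
proof (cases "a = v \<or> b = v \<or> a = b")
  case True
  have "a \<in> T" "b \<in> T" using assms is_treeD(1)[OF tr] by auto
  then have "(a, a) \<in> le" "(b, b) \<in> le" using is_treeD(2)[OF tr] unfolding refl_on_def by auto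
  then show ?thesis using True assms by auto
next
  case False
  have v: "v \<in> T" using assms is_treeD(1)[OF tr] by auto
  have ab: "a \<in> tree_pred T le v" "b \<in> tree_pred T le v"
    using assms False is_treeD(1)[OF tr] unfolding tree_pred_def by auto
  have "Well_order (Restr le (tree_pred T le v))"
    and "Field (Restr le (tree_pred T le v)) = tree_pred T le v"
    using Well_order_tree_pred[OF tr v] by auto
  then have "total_on (tree_pred T le v) (Restr le (tree_pred T le v))"
    unfolding well_order_on_def linear_order_on_def by metis
  then show ?thesis using ab False unfolding total_on_def by blast
qed

lemma tree_pred_of_tree_pred:
  assumes tr: "is_tree T le" and s: "s \<in> tree_pred T le t"
  shows "tree_pred T le s \<subseteq> tree_pred T le t"
    and "underS (Restr le (tree_pred T le t)) s = tree_pred T le s"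
proof -
  show sub: "tree_pred T le s \<subseteq> tree_pred T le t"
    using s is_treeD[OF tr] unfolding tree_pred_def antisym_def trans_def by blast
  show "underS (Restr le (tree_pred T le t)) s = tree_pred T le s"
    using s sub is_treeD(1)[OF tr] unfolding underS_def tree_pred_def by blast
qed

lemma tree_pred_ordLess_height:
  assumes tr: "is_tree T le" and W: "Well_order r" and h: "tree_level T le r = {}"
    and t: "t \<in> T"
  shows "Restr le (tree_pred T le t) <o r"
proof (rule ccontr)
  let ?P = "Restr le (tree_pred T le t)"
  have "r <o ?P \<or> r =o ?P" if "\<not> ?P <o r"
    using that ordLess_or_ordLeq[OF Well_order_tree_pred(1)[OF tr t] W]
      ordLeq_iff_ordLess_or_ordIso by blast
  moreover have "\<not> r =o ?P" using h t ordIso_symmetric unfolding tree_level_def by blast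
  moreover have "\<not> r <o ?P"
  proof
    assume "r <o ?P"
    then obtain s where s: "s \<in> tree_pred T le t" and iso: "r =o Restr ?P (underS ?P s)"
      using ordLess_iff_ordIso_Restr[OF Well_order_tree_pred(1)[OF tr t] W]
        Well_order_tree_pred(2)[OF tr t] by blast
    have "Restr ?P (underS ?P s) = Restr le (tree_pred T le s)"
      using tree_pred_of_tree_pred[OF tr s] by auto
    then have "Restr le (tree_pred T le s) =o r" using iso ordIso_symmetric by metis
    moreover have "s \<in> T" using s unfolding tree_pred_def by auto
    ultimately have "s \<in> tree_level T le r" unfolding tree_level_def by blast
    then show False using h by auto
  qed
  ultimately show "\<not> ?P <o r \<Longrightarrow> False" by blast
qed

lemma tree_level_exists:
  assumes tr: "is_tree T le" and W: "Well_order r" and h: "tree_level T le r = {}"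
    and t: "t \<in> T"
  shows "\<exists>c\<in>Field r. t \<in> tree_level T le (Restr r (underS r c))"
proof -
  obtain c where "c \<in> Field r" "Restr le (tree_pred T le t) =o Restr r (underS r c)"
    using tree_pred_ordLess_height[OF assms]
      ordLess_iff_ordIso_Restr[OF W Well_order_tree_pred(1)[OF tr t]] by blast
  then show ?thesis using t unfolding tree_level_def by blast
qed

lemma tree_level_unique:
  assumes W: "Well_order r" and c: "c \<in> Field r" "c' \<in> Field r"
    and t: "t \<in> tree_level T le (Restr r (underS r c))" "t \<in> tree_level T le (Restr r (underS r c'))"
  shows "c = c'"
proof -
  have "Restr le (tree_pred T le t) =o Restr r (underS r c)"
    and "Restr le (tree_pred T le t) =o Restr r (underS r c')"
    using t unfolding tree_level_def by auto
  then have "Restr r (underS r c) =o Restr r (underS r c')"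
    using ordIso_transitive ordIso_symmetric by blast
  then show ?thesis using Restr_underS_ordIso_imp_eq[OF W c] by blast
qed

lemma branch_downward_closed:
  assumes tr: "is_tree T le" and B: "is_branch T le B" and x: "x \<in> B" and p: "(p, x) \<in> le"
  shows "p \<in> B"
proof -
  have ch: "is_chain T le B" using B unfolding is_branch_def by auto
  have "(p, y) \<in> le \<or> (y, p) \<in> le" if "y \<in> B" for y
  proof -
    have "(x, y) \<in> le \<or> (y, x) \<in> le" using ch x that unfolding is_chain_def by auto
    then show ?thesis
    proof
      assume "(x, y) \<in> le"
      then show ?thesis using p is_treeD(4)[OF tr] unfolding trans_def by blast
    next
      assume "(y, x) \<in> le"
      then show ?thesis using tree_le_below_comparable[OF tr p] by blast
    qed
  qed
  moreover have "(p, p) \<in> le" using p is_treeD(1,2)[OF tr] unfolding refl_on_def by auto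
  ultimately have "is_chain T le (insert p B)"
    using ch p is_treeD(1)[OF tr] unfolding is_chain_def by auto
  then show ?thesis using B unfolding is_branch_def by blast
qed

lemma Field_Restr_branch:
  assumes "is_tree T le" "is_branch T le B" shows "Field (Restr le B) = B"
proof -
  have "B \<subseteq> T" using assms(2) unfolding is_branch_def is_chain_def by auto
  then show ?thesis using is_treeD(2)[OF assms(1)] unfolding refl_on_def Field_def by blast
qed

lemma branch_meets_level:
  assumes tr: "is_tree T le" and B: "is_branch T le B" and iso: "Restr le B =o r"
    and \<beta>: "\<beta> \<in> Field r"
  shows "\<exists>w\<in>B. w \<in> tree_level T le (Restr r (underS r \<beta>))"
proof -
  let ?WB = "Restr le B"
  have W: "Well_order r" and WB: "Well_order ?WB" using iso unfolding ordIso_def by auto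
  have BT: "B \<subseteq> T" using B unfolding is_branch_def is_chain_def by auto
  have "Restr r (underS r \<beta>) <o ?WB"
    using underS_Restr_ordLess[OF W] \<beta> iso ordIso_symmetric ordLess_ordIso_trans by blast
  then obtain w where w: "w \<in> B" and wi: "Restr r (underS r \<beta>) =o Restr ?WB (underS ?WB w)"
    using ordLess_iff_ordIso_Restr[OF WB Well_order_Restr[OF W]] Field_Restr_branch[OF tr B]
    by blast
  have pB: "tree_pred T le w \<subseteq> B"
    using branch_downward_closed[OF tr B w] unfolding tree_pred_def by auto
  have "underS ?WB w = tree_pred T le w"
    using pB BT w unfolding underS_def tree_pred_def by auto
  then have "Restr ?WB (underS ?WB w) = Restr le (tree_pred T le w)" using pB by auto
  then have "Restr le (tree_pred T le w) =o Restr r (underS r \<beta>)"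
    using wi ordIso_symmetric by metis
  then show ?thesis using w BT unfolding tree_level_def by blast
qed

lemma card_of_branch:
  assumes tr: "is_tree T le" and B: "is_branch T le B" and iso: "Restr le B =o r"
    and C: "Card_order r"
  shows "|B| =o r"
proof -
  have "|B| =o |Field r|" using card_of_cong[OF iso] Field_Restr_branch[OF tr B] by simp
  then show ?thesis using card_of_Field_ordIso[OF C] ordIso_transitive by blast
qed

lemma card_of_tree_ordLeq:
  assumes C: "Card_order r" and inf: "infinite (Field r)" and tr: "is_tree T le"
    and h: "tree_level T le r = {}"
    and lev: "\<forall>a\<in>Field r. |tree_level T le (Restr r (underS r a))| <o r"
  shows "|T| \<le>o |Field r|"
proof -
  have W: "Well_order r" using card_order_on_well_order_on C by blast
  have "T \<subseteq> (\<Union>c\<in>Field r. tree_level T le (Restr r (underS r c)))"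
    using tree_level_exists[OF tr W h] by blast
  moreover have "|\<Union>c\<in>Field r. tree_level T le (Restr r (underS r c))| \<le>o |Field r|"
    by (rule card_of_UNION_ordLeq_infinite[OF inf card_of_refl[THEN ordIso_imp_ordLeq]])
      (use lev card_of_ordLeq_Field_if_ordLess[OF C] in blast)
  ultimately show ?thesis using ordLeq_transitive[OF card_of_mono1] by blast
qed

lemma small_set_misses_level:
  assumes C: "Card_order r" and tr: "is_tree T le" and h: "tree_level T le r = {}"
    and S: "S \<subseteq> T" "|S| <o r"
  shows "\<exists>\<beta>\<in>Field r. S \<inter> tree_level T le (Restr r (underS r \<beta>)) = {}"
proof (rule ccontr)
  have W: "Well_order r" using card_order_on_well_order_on C by blast
  define level_of where "level_of s = (SOME c. c \<in> Field r \<and> s \<in> tree_level T le (Restr r (underS r c)))" for s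
  have level_of: "level_of s \<in> Field r \<and> s \<in> tree_level T le (Restr r (underS r (level_of s)))"
    if "s \<in> S" for s
  proof -
    have "\<exists>c. c \<in> Field r \<and> s \<in> tree_level T le (Restr r (underS r c))"
      using tree_level_exists[OF tr W h] that S(1) by blast
    then show ?thesis unfolding level_of_def by (rule someI_ex)
  qed
  assume missed: "\<not> ?thesis"
  have "Field r \<subseteq> level_of ` S"
  proof
    fix c assume c: "c \<in> Field r"
    then obtain s where s: "s \<in> S" "s \<in> tree_level T le (Restr r (underS r c))"
      using missed by blast
    then have "c = level_of s"
      using tree_level_unique[OF W c conjunct1[OF level_of] s(2) conjunct2[OF level_of]] by blast
    then show "c \<in> level_of ` S" using s(1) by blast
  qed
  then have "|Field r| \<le>o |S|" using ordLeq_transitive[OF card_of_mono1 card_of_image] by blast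
  then have "|Field r| <o r" using S(2) by (rule ordLeq_ordLess_trans)
  then show False using card_of_Field_ordIso[OF C] not_ordLess_ordIso by blast
qed

context
  fixes T :: "'a set" and le :: "'a rel" and f :: "'a \<Rightarrow> 'b"
  assumes tree: "is_tree T le" and inj: "inj_on f T"
begin

lemma map_prod_image_iff:
  assumes "x \<in> T" "y \<in> T"
  shows "(f x, f y) \<in> map_prod f f ` le \<longleftrightarrow> (x, y) \<in> le"
proof
  assume "(f x, f y) \<in> map_prod f f ` le"
  then obtain a b where ab: "(a, b) \<in> le" "f a = f x" "f b = f y" by auto
  moreover have "a \<in> T" "b \<in> T" using ab(1) is_treeD(1)[OF tree] by auto
  ultimately show "(x, y) \<in> le" using assms inj unfolding inj_on_def by metis
qed auto

lemma map_prod_image_cases: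
  assumes "p \<in> map_prod f f ` le"
  obtains x y where "x \<in> T" "y \<in> T" "(x, y) \<in> le" "p = (f x, f y)"
proof -
  obtain x y where xy: "(x, y) \<in> le" "p = (f x, f y)" using assms by auto
  moreover have "x \<in> T" "y \<in> T" using xy(1) is_treeD(1)[OF tree] by auto
  ultimately show thesis using that by blast
qed

lemma Restr_map_prod_image:
  assumes A: "A \<subseteq> T"
  shows "Restr (map_prod f f ` le) (f ` A) = dir_image (Restr le A) f"
proof
  show "Restr (map_prod f f ` le) (f ` A) \<subseteq> dir_image (Restr le A) f"
  proof (rule subrelI)
    fix a b assume ab: "(a, b) \<in> Restr (map_prod f f ` le) (f ` A)"
    then obtain x y where xy: "x \<in> A" "y \<in> A" "a = f x" "b = f y" by blast
    then have "(x, y) \<in> le" using ab map_prod_image_iff[of x y] A by auto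
    then show "(a, b) \<in> dir_image (Restr le A) f" using xy unfolding dir_image_def by blast
  qed
  show "dir_image (Restr le A) f \<subseteq> Restr (map_prod f f ` le) (f ` A)"
  proof (rule subrelI)
    fix a b assume "(a, b) \<in> dir_image (Restr le A) f"
    then obtain x y where xy: "(x, y) \<in> le" "x \<in> A" "y \<in> A" "a = f x" "b = f y"
      unfolding dir_image_def by blast
    then show "(a, b) \<in> Restr (map_prod f f ` le) (f ` A)" by auto
  qed
qed

lemma tree_pred_inj_image:
  assumes t: "t \<in> T"
  shows "tree_pred (f ` T) (map_prod f f ` le) (f t) = f ` tree_pred T le t"
proof
  have neq: "f s \<noteq> f t \<longleftrightarrow> s \<noteq> t" if "s \<in> T" for s
    using inj t that unfolding inj_on_def by auto
  show "tree_pred (f ` T) (map_prod f f ` le) (f t) \<subseteq> f ` tree_pred T le t"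
  proof
    fix s' assume "s' \<in> tree_pred (f ` T) (map_prod f f ` le) (f t)"
    then have s': "s' \<in> f ` T" "(s', f t) \<in> map_prod f f ` le" "s' \<noteq> f t"
      unfolding tree_pred_def by simp_all
    then obtain s where s: "s \<in> T" "s' = f s" by blast
    then have "(s, t) \<in> le" "s \<noteq> t" using s' map_prod_image_iff[OF s(1) t] neq by auto
    then show "s' \<in> f ` tree_pred T le t" using s unfolding tree_pred_def by auto
  qed
  show "f ` tree_pred T le t \<subseteq> tree_pred (f ` T) (map_prod f f ` le) (f t)"
  proof
    fix s' assume "s' \<in> f ` tree_pred T le t"
    then obtain s where s: "s \<in> T" "s' = f s" "(s, t) \<in> le" "s \<noteq> t"
      unfolding tree_pred_def by auto
    then have "(f s, f t) \<in> map_prod f f ` le" "f s \<noteq> f t" using neq by auto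
    then show "s' \<in> tree_pred (f ` T) (map_prod f f ` le) (f t)"
      using s unfolding tree_pred_def by auto
  qed
qed

lemma tree_pred_inj_image_ordIso:
  assumes t: "t \<in> T"
  shows "Restr (map_prod f f ` le) (tree_pred (f ` T) (map_prod f f ` le) (f t))
           = dir_image (Restr le (tree_pred T le t)) f"
    and "Restr le (tree_pred T le t)
           =o Restr (map_prod f f ` le) (tree_pred (f ` T) (map_prod f f ` le) (f t))"
proof -
  have sub: "tree_pred T le t \<subseteq> T" unfolding tree_pred_def by auto
  show eq: "Restr (map_prod f f ` le) (tree_pred (f ` T) (map_prod f f ` le) (f t))
           = dir_image (Restr le (tree_pred T le t)) f"
    using tree_pred_inj_image[OF t] Restr_map_prod_image[OF sub] by simp
  have "inj_on f (Field (Restr le (tree_pred T le t)))"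
    using inj_on_subset[OF inj] sub Well_order_tree_pred(2)[OF tree t] by simp
  then show "Restr le (tree_pred T le t)
           =o Restr (map_prod f f ` le) (tree_pred (f ` T) (map_prod f f ` le) (f t))"
    using eq dir_image_ordIso[OF Well_order_tree_pred(1)[OF tree t]] by simp
qed

lemma is_tree_inj_image: "is_tree (f ` T) (map_prod f f ` le)"
  unfolding is_tree_def
proof (intro conjI ballI)
  note le = is_treeD[OF tree]
  show "map_prod f f ` le \<subseteq> f ` T \<times> f ` T" using le(1) by auto
  show "refl_on (f ` T) (map_prod f f ` le)"
    using le(1,2) map_prod_image_iff unfolding refl_on_def by auto
  show "antisym (map_prod f f ` le)"
    unfolding antisym_def
  proof (intro allI impI)
    fix a b assume ab: "(a, b) \<in> map_prod f f ` le" and ba: "(b, a) \<in> map_prod f f ` le"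
    obtain x y where xy: "x \<in> T" "y \<in> T" "(x, y) \<in> le" "(a, b) = (f x, f y)"
      using map_prod_image_cases[OF ab] by blast
    then have "(y, x) \<in> le" using ba map_prod_image_iff by auto
    then show "a = b" using xy le(3) unfolding antisym_def by auto
  qed
  show "trans (map_prod f f ` le)"
    unfolding trans_def
  proof (intro allI impI)
    fix a b c assume ab: "(a, b) \<in> map_prod f f ` le" and bc: "(b, c) \<in> map_prod f f ` le"
    obtain x y where xy: "x \<in> T" "y \<in> T" "(x, y) \<in> le" "(a, b) = (f x, f y)"
      using map_prod_image_cases[OF ab] by blast
    obtain y' z where yz: "y' \<in> T" "z \<in> T" "(y', z) \<in> le" "(b, c) = (f y', f z)"
      using map_prod_image_cases[OF bc] by blast
    have "y = y'" using xy yz inj unfolding inj_on_def by auto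
    then have "(x, z) \<in> le" using xy yz le(4) unfolding trans_def by blast
    then show "(a, c) \<in> map_prod f f ` le" using xy yz by auto
  qed
  fix t' assume "t' \<in> f ` T"
  then obtain t where t: "t \<in> T" "t' = f t" by auto
  have "inj_on f (Field (Restr le (tree_pred T le t)))"
    using inj_on_subset[OF inj] Well_order_tree_pred(2)[OF tree t(1)]
    unfolding tree_pred_def by auto
  then have "Well_order (dir_image (Restr le (tree_pred T le t)) f)"
    by (rule Well_order_dir_image[OF Well_order_tree_pred(1)[OF tree t(1)]])
  moreover have "Field (dir_image (Restr le (tree_pred T le t)) f) = f ` tree_pred T le t"
    using dir_image_Field[of "Restr le (tree_pred T le t)" f] Well_order_tree_pred(2)[OF tree t(1)]
    by simp
  ultimately show "well_order_on (tree_pred (f ` T) (map_prod f f ` le) t')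
      (Restr (map_prod f f ` le) (tree_pred (f ` T) (map_prod f f ` le) t'))"
    using tree_pred_inj_image_ordIso(1)[OF t(1)] tree_pred_inj_image[OF t(1)] t(2) by simp
qed

lemma tree_level_inj_image:
  "tree_level (f ` T) (map_prod f f ` le) w = f ` tree_level T le w"
proof -
  have iff: "Restr (map_prod f f ` le) (tree_pred (f ` T) (map_prod f f ` le) (f t)) =o w
      \<longleftrightarrow> Restr le (tree_pred T le t) =o w" if "t \<in> T" for t
    using ordIso_transitive[OF tree_pred_inj_image_ordIso(2)[OF that]]
      ordIso_transitive[OF ordIso_symmetric[OF tree_pred_inj_image_ordIso(2)[OF that]]] by blast
  show ?thesis
  proof
    show "tree_level (f ` T) (map_prod f f ` le) w \<subseteq> f ` tree_level T le w"
    proof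
      fix t' assume t': "t' \<in> tree_level (f ` T) (map_prod f f ` le) w"
      then obtain t where t: "t \<in> T" "t' = f t" unfolding tree_level_def by blast
      then show "t' \<in> f ` tree_level T le w" using t' iff[OF t(1)] unfolding tree_level_def by simp
    qed
    show "f ` tree_level T le w \<subseteq> tree_level (f ` T) (map_prod f f ` le) w"
      using iff unfolding tree_level_def by auto
  qed
qed

lemma is_chain_inj_image:
  assumes C: "C \<subseteq> T"
  shows "is_chain (f ` T) (map_prod f f ` le) (f ` C) \<longleftrightarrow> is_chain T le C"
proof -
  have iff: "x \<in> C \<Longrightarrow> y \<in> C \<Longrightarrow> (f x, f y) \<in> map_prod f f ` le \<longleftrightarrow> (x, y) \<in> le" for x y
    using map_prod_image_iff[OF subsetD[OF C] subsetD[OF C]] .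
  have "is_chain (f ` T) (map_prod f f ` le) (f ` C)
      \<longleftrightarrow> (\<forall>x\<in>C. \<forall>y\<in>C. (f x, f y) \<in> map_prod f f ` le \<or> (f y, f x) \<in> map_prod f f ` le)"
    unfolding is_chain_def using C by (simp add: image_mono)
  also have "\<dots> \<longleftrightarrow> is_chain T le C" unfolding is_chain_def using C by (simp add: iff)
  finally show ?thesis .
qed

lemma is_branch_inj_image:
  assumes B: "is_branch T le B"
  shows "is_branch (f ` T) (map_prod f f ` le) (f ` B)"
proof -
  have BT: "B \<subseteq> T" using B unfolding is_branch_def is_chain_def by auto
  have "C' = f ` B" if C': "is_chain (f ` T) (map_prod f f ` le) C'" "f ` B \<subseteq> C'" for C'
  proof -
    define C where "C = T \<inter> f -` C'"
    have CT: "C \<subseteq> T" unfolding C_def by blast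
    have C'_eq: "C' = f ` C" using C'(1) unfolding C_def is_chain_def by blast
    then have "is_chain T le C" using is_chain_inj_image[OF CT] C'(1) by simp
    moreover have "B \<subseteq> C" using BT C'(2) unfolding C_def by blast
    ultimately have "C = B" using B unfolding is_branch_def by blast
    then show ?thesis using C'_eq by simp
  qed
  moreover have "is_chain (f ` T) (map_prod f f ` le) (f ` B)"
    using is_chain_inj_image[OF BT] B unfolding is_branch_def by blast
  ultimately show ?thesis unfolding is_branch_def by blast
qed

lemma kurepa_tree_inj_image:
  assumes K: "kurepa_tree r T le"
  shows "kurepa_tree r (f ` T) (map_prod f f ` le)"
proof -
  let ?Bs = "{B. is_branch T le B \<and> Restr le B =o r}"
  let ?Bs' = "{B. is_branch (f ` T) (map_prod f f ` le) B \<and> Restr (map_prod f f ` le) B =o r}"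
  have image_mem: "f ` B \<in> ?Bs'" if B: "B \<in> ?Bs" for B
  proof -
    have BT: "B \<subseteq> T" using B unfolding is_branch_def is_chain_def by auto
    have Bi: "Restr le B =o r" using B by auto
    have "Well_order (Restr le B)" using Bi unfolding ordIso_def by auto
    moreover have "inj_on f (Field (Restr le B))"
      using inj_on_subset[OF inj subset_trans[OF Field_Restr_subset BT]] .
    ultimately have "Restr le B =o dir_image (Restr le B) f" by (rule dir_image_ordIso)
    then have "Restr (map_prod f f ` le) (f ` B) =o r"
      using Restr_map_prod_image[OF BT] ordIso_transitive[OF ordIso_symmetric Bi] by simp
    then show ?thesis using is_branch_inj_image B by blast
  qed
  have "inj_on ((`) f) ?Bs"
    using inj_on_image_eq_iff[OF inj] unfolding inj_on_def is_branch_def is_chain_def by auto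
  then have "|?Bs| \<le>o |?Bs'|" using image_mem card_of_ordLeq[of ?Bs ?Bs'] by blast
  moreover have "cardSuc r \<le>o |?Bs|" using K unfolding kurepa_tree_def by blast
  ultimately have "cardSuc r \<le>o |?Bs'|" using ordLeq_transitive by blast
  moreover have "|f ` tree_level T le (Restr r (underS r a))| <o r" if "a \<in> Field r" for a
    using K that ordLeq_ordLess_trans[OF card_of_image] unfolding kurepa_tree_def by blast
  moreover have "tree_height_is (f ` T) (map_prod f f ` le) r"
    using K unfolding kurepa_tree_def tree_height_is_def tree_level_inj_image by simp
  ultimately show ?thesis
    using is_tree_inj_image unfolding kurepa_tree_def tree_level_inj_image by blast
qed

end

section \<open>Connectivity in graphs\<close>

lemma conn_in_equiv: "equiv U (conn_in E U)"
proof (rule equivI)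
  show "refl_on U (conn_in E U)" unfolding conn_in_def refl_on_def by auto
  have "sym (adj E)" unfolding adj_def sym_def by (auto simp: insert_commute)
  then have "sym (Restr (adj E) U)" unfolding sym_def by blast
  then have "sym ((Restr (adj E) U)\<^sup>*)" by (rule sym_rtrancl)
  then show "sym (conn_in E U)" unfolding conn_in_def sym_def by auto
  show "trans (conn_in E U)" unfolding conn_in_def by (rule trans_Restr) (rule trans_rtrancl)
  show "conn_in E U \<subseteq> U \<times> U" unfolding conn_in_def by auto
qed

lemma conn_in_refl: "x \<in> U \<Longrightarrow> (x, x) \<in> conn_in E U"
  unfolding conn_in_def by auto

lemma conn_in_sym: "(x, y) \<in> conn_in E U \<Longrightarrow> (y, x) \<in> conn_in E U"
  using conn_in_equiv[of U E] unfolding equiv_def sym_def by blast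

lemma conn_in_trans:
  "(x, y) \<in> conn_in E U \<Longrightarrow> (y, z) \<in> conn_in E U \<Longrightarrow> (x, z) \<in> conn_in E U"
  using conn_in_equiv[of U E] unfolding equiv_def trans_def by blast

lemma conn_in_mono:
  assumes "U \<subseteq> U'" shows "conn_in E U \<subseteq> conn_in E U'"
proof -
  have "(Restr (adj E) U)\<^sup>* \<subseteq> (Restr (adj E) U')\<^sup>*" using assms by (intro rtrancl_mono) auto
  then show ?thesis using assms unfolding conn_in_def by auto
qed

lemma conn_in_edge:
  assumes "x \<in> U" "y \<in> U" "{x, y} \<in> E" shows "(x, y) \<in> conn_in E U"
  using assms unfolding conn_in_def adj_def by auto

lemma conn_in_closed:
  assumes closed: "\<And>v w. v \<in> D \<Longrightarrow> (v, w) \<in> adj E \<Longrightarrow> w \<in> U \<Longrightarrow> w \<in> D"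
    and xy: "(x, y) \<in> conn_in E U" and x: "x \<in> D"
  shows "y \<in> D"
proof -
  have "(x, y) \<in> (Restr (adj E) U)\<^sup>*" using xy unfolding conn_in_def by auto
  then show ?thesis
  proof (induction rule: rtrancl_induct)
    case base
    then show ?case using x .
  next
    case (step y z)
    then show ?case using closed by auto
  qed
qed

lemma induces_connected_conn_in:
  assumes "induces_connected E X" "X \<subseteq> U" "x \<in> X" "y \<in> X"
  shows "(x, y) \<in> conn_in E U"
proof -
  have "(x, y) \<in> conn_in E X" using assms(1,3,4) unfolding induces_connected_def by blast
  then show ?thesis using conn_in_mono[OF assms(2)] by blast
qed

lemma components_nonempty_if: "U \<noteq> {} \<Longrightarrow> components E U \<noteq> {}"
  unfolding components_def quotient_def by auto

lemma component_of: "v \<in> U \<Longrightarrow> conn_in E U `` {v} \<in> components E U"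
  unfolding components_def by (rule quotientI)

lemma component_nonempty: "X \<in> components E U \<Longrightarrow> X \<noteq> {}"
  using in_quotient_imp_non_empty[OF conn_in_equiv] unfolding components_def by blast

lemma components_disjoint:
  "X \<in> components E U \<Longrightarrow> Y \<in> components E U \<Longrightarrow> X \<inter> Y \<noteq> {} \<Longrightarrow> X = Y"
  using quotient_disj[OF conn_in_equiv] unfolding components_def by blast

lemma card_of_components_ordLeq:
  assumes Q: "Q \<subseteq> U" and cover: "\<forall>v\<in>U. \<exists>q\<in>Q. (v, q) \<in> conn_in E U"
  shows "|components E U| \<le>o |Q|"
proof -
  have "components E U \<subseteq> (\<lambda>q. conn_in E U `` {q}) ` Q"
  proof
    fix X assume "X \<in> components E U"
    then obtain v where v: "v \<in> U" and X: "X = conn_in E U `` {v}"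
      unfolding components_def quotient_def by auto
    obtain q where q: "q \<in> Q" "(v, q) \<in> conn_in E U" using cover v by auto
    then show "X \<in> (\<lambda>q. conn_in E U `` {q}) ` Q"
      using X equiv_class_eq[OF conn_in_equiv q(2)] by auto
  qed
  then show ?thesis using ordLeq_transitive[OF card_of_mono1 card_of_image] by blast
qed

lemma K_minor_conn_in:
  assumes minor: "K_minor k V E W" and X: "X \<in> W" "X \<subseteq> U" "x \<in> X"
    and Y: "Y \<in> W" "Y \<subseteq> U" "y \<in> Y"
  shows "(x, y) \<in> conn_in E U"
proof -
  have conn: "induces_connected E X" "induces_connected E Y"
    using minor X(1) Y(1) unfolding K_minor_def by blast+
  show ?thesis
  proof (cases "X = Y")
    case True
    then show ?thesis using induces_connected_conn_in[OF conn(1) X(2,3)] Y(3) by blast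
  next
    case False
    then obtain a b where ab: "a \<in> X" "b \<in> Y" "{a, b} \<in> E"
      using minor X(1) Y(1) unfolding K_minor_def by metis
    have "(x, a) \<in> conn_in E U" using induces_connected_conn_in[OF conn(1) X(2,3) ab(1)] .
    moreover have "(a, b) \<in> conn_in E U" using conn_in_edge[OF _ _ ab(3)] ab(1,2) X(2) Y(2) by blast
    moreover have "(b, y) \<in> conn_in E U" using induces_connected_conn_in[OF conn(2) Y(2) ab(2) Y(3)] .
    ultimately show ?thesis using conn_in_trans by metis
  qed
qed

lemma K_minor_singletons:
  assumes "B \<subseteq> V" "|B| =o k" "\<And>x y. x \<in> B \<Longrightarrow> y \<in> B \<Longrightarrow> x \<noteq> y \<Longrightarrow> {x, y} \<in> E"
  shows "K_minor k V E ((\<lambda>x. {x}) ` B)"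
  unfolding K_minor_def
proof (intro conjI ballI impI)
  have "bij_betw (\<lambda>x. {x}) B ((\<lambda>x. {x}) ` B)" unfolding bij_betw_def inj_on_def by auto
  then show "|(\<lambda>x. {x}) ` B| =o k"
    using assms(2) card_of_ordIso ordIso_transitive ordIso_symmetric by blast
next
  fix A assume "A \<in> (\<lambda>x. {x}) ` B"
  then obtain x where "x \<in> B" "A = {x}" by blast
  then show "A \<subseteq> V" "induces_connected E A"
    using assms(1) conn_in_refl[of x "{x}" E] unfolding induces_connected_def by auto
next
  fix A A' assume "A \<in> (\<lambda>x. {x}) ` B" "A' \<in> (\<lambda>x. {x}) ` B" "A \<noteq> A'"
  then obtain x y where "x \<in> B" "y \<in> B" "A = {x}" "A' = {y}" "x \<noteq> y" by blast
  then show "A \<inter> A' = {}" "\<exists>a\<in>A. \<exists>b\<in>A'. {a, b} \<in> E" using assms(3) by auto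
qed

section \<open>From a Kurepa tree to a graph\<close>

locale kurepa_tree_graph =
  fixes r :: "'b rel" and T :: "'a set" and le :: "'a rel"
  assumes card_order: "Card_order r" and infinite: "infinite (Field r)"
    and kurepa: "kurepa_tree r T le"
begin

definition kappa_branches :: "'a set set" where
  "kappa_branches = {B. is_branch T le B \<and> Restr le B =o r}"

definition vertices :: "'a set" where
  "vertices = \<Union>kappa_branches"

definition comparability_edges :: "'a set set" where
  "comparability_edges = {{x, y} | x y. x \<in> vertices \<and> y \<in> vertices \<and> x \<noteq> y \<and> (x, y) \<in> le}"

lemma well_order: "Well_order r"
  using card_order_on_well_order_on card_order by blast

lemma tree: "is_tree T le"
  and height: "tree_level T le r = {}"
  and small_levels: "\<And>a. a \<in> Field r \<Longrightarrow> |tree_level T le (Restr r (underS r a))| <o r"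
  and many_branches: "cardSuc r \<le>o |kappa_branches|"
  using kurepa unfolding kurepa_tree_def tree_height_is_def kappa_branches_def by auto

lemma kappa_branchD:
  assumes "B \<in> kappa_branches"
  shows "is_branch T le B" "Restr le B =o r" "B \<subseteq> T" "|B| =o r"
  using assms card_of_branch[OF tree _ _ card_order]
  unfolding kappa_branches_def is_branch_def is_chain_def by auto

lemma vertices_subset: "vertices \<subseteq> T"
  using kappa_branchD(3) unfolding vertices_def by blast

lemma comparability_edge_iff:
  "{x, y} \<in> comparability_edges \<longleftrightarrow>
     x \<in> vertices \<and> y \<in> vertices \<and> x \<noteq> y \<and> ((x, y) \<in> le \<or> (y, x) \<in> le)"
  unfolding comparability_edges_def by (auto simp: doubleton_eq_iff)

lemma adj_comparability_edges:
  "(x, y) \<in> adj comparability_edges \<longleftrightarrow>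
     x \<in> vertices \<and> y \<in> vertices \<and> x \<noteq> y \<and> ((x, y) \<in> le \<or> (y, x) \<in> le)"
  unfolding adj_def using comparability_edge_iff by simp

lemma branch_vertices_adjacent:
  assumes "B \<in> kappa_branches" "x \<in> B" "y \<in> B" "x \<noteq> y"
  shows "{x, y} \<in> comparability_edges"
proof -
  have "(x, y) \<in> le \<or> (y, x) \<in> le"
    using kappa_branchD(1)[OF assms(1)] assms(2,3) unfolding is_branch_def is_chain_def by blast
  moreover have "x \<in> vertices" "y \<in> vertices" using assms(1-3) unfolding vertices_def by blast+
  ultimately show ?thesis using comparability_edge_iff assms(4) by blast
qed

lemma is_graph_comparability: "is_graph vertices comparability_edges"
  unfolding is_graph_def comparability_edges_def by auto

lemma card_of_vertices: "|vertices| =o r"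
proof -
  obtain B where B: "B \<in> kappa_branches"
    using nonempty_if_cardSuc_ordLeq[OF card_order many_branches] by blast
  have "|vertices| \<le>o |Field r|"
    using ordLeq_transitive[OF card_of_mono1[OF vertices_subset]
        card_of_tree_ordLeq[OF card_order infinite tree height]] small_levels by blast
  then have "|vertices| \<le>o r" using card_of_Field_ordIso[OF card_order] ordLeq_ordIso_trans by blast
  moreover have "|B| \<le>o |vertices|" using B unfolding vertices_def by (intro card_of_mono1) auto
  then have "r \<le>o |vertices|"
    using ordIso_ordLeq_trans[OF ordIso_symmetric[OF kappa_branchD(4)[OF B]]] by blast
  ultimately show ?thesis using ordIso_iff_ordLeq by blast
qed

lemma conn_in_level:
  assumes \<beta>: "\<beta> \<in> Field r" and missed: "S \<inter> tree_level T le (Restr r (underS r \<beta>)) = {}"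
    and v: "v \<in> vertices - S"
  shows "\<exists>w\<in>vertices \<inter> tree_level T le (Restr r (underS r \<beta>)).
           (v, w) \<in> conn_in comparability_edges (vertices - S)"
proof -
  obtain B where B: "B \<in> kappa_branches" "v \<in> B" using v unfolding vertices_def by blast
  obtain w where w: "w \<in> B" "w \<in> tree_level T le (Restr r (underS r \<beta>))"
    using branch_meets_level[OF tree kappa_branchD(1,2)[OF B(1)] \<beta>] by blast
  have wV: "w \<in> vertices" using B(1) w(1) unfolding vertices_def by blast
  have "(v, w) \<in> conn_in comparability_edges (vertices - S)"
  proof (cases "v = w")
    case True
    then show ?thesis using conn_in_refl[OF v] by simp
  next
    case False
    have "w \<in> vertices - S" using wV w(2) missed by blast
    then show ?thesis using conn_in_edge[OF v _ branch_vertices_adjacent[OF B w(1) False]] by blast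
  qed
  then show ?thesis using wV w(2) by blast
qed

lemma kl_connected_comparability: "kl_connected r r vertices comparability_edges"
  unfolding kl_connected_def
proof (intro allI impI conjI)
  fix S assume "S \<subseteq> vertices \<and> |S| <o r"
  then have SV: "S \<subseteq> vertices" and S_small: "|S| <o r" by auto
  show "components comparability_edges (vertices - S) \<noteq> {}"
  proof (rule components_nonempty_if)
    show "vertices - S \<noteq> {}"
    proof
      assume "vertices - S = {}"
      then have "|vertices| <o r" using ordLeq_ordLess_trans[OF card_of_mono1 S_small] by blast
      then show False using card_of_vertices not_ordLess_ordIso by blast
    qed
  qed
  obtain \<beta> where \<beta>: "\<beta> \<in> Field r" and missed: "S \<inter> tree_level T le (Restr r (underS r \<beta>)) = {}"
    using small_set_misses_level[OF card_order tree height _ S_small] SV vertices_subset by blast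
  define Q where "Q = vertices \<inter> tree_level T le (Restr r (underS r \<beta>))"
  have "Q \<subseteq> vertices - S" using missed unfolding Q_def by blast
  then have "|components comparability_edges (vertices - S)| \<le>o |Q|"
    using card_of_components_ordLeq conn_in_level[OF \<beta> missed] unfolding Q_def by blast
  moreover have "|Q| <o r"
    using ordLeq_ordLess_trans[OF card_of_mono1 small_levels[OF \<beta>]] unfolding Q_def by blast
  ultimately show "|components comparability_edges (vertices - S)| <o r"
    by (rule ordLeq_ordLess_trans)
qed

lemma card_of_branch_Int_ordLess:
  assumes B: "B \<in> kappa_branches" and B': "B' \<in> kappa_branches" and x: "x \<in> B" "x \<notin> B'"
  shows "|B \<inter> B'| <o r"
proof -
  have xT: "x \<in> T" using x(1) kappa_branchD(3)[OF B] by blast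
  have "B \<inter> B' \<subseteq> tree_pred T le x"
  proof
    fix s assume s: "s \<in> B \<inter> B'"
    have "(x, s) \<in> le \<or> (s, x) \<in> le"
      using s x(1) kappa_branchD(1)[OF B] unfolding is_branch_def is_chain_def by blast
    moreover have "(x, s) \<notin> le" using branch_downward_closed[OF tree kappa_branchD(1)[OF B'], of s x] s x(2) by blast
    moreover have "s \<in> T" "s \<noteq> x" using s x kappa_branchD(3)[OF B] by auto
    ultimately show "s \<in> tree_pred T le x" unfolding tree_pred_def by blast
  qed
  moreover obtain c where c: "c \<in> Field r" "x \<in> tree_level T le (Restr r (underS r c))"
    using tree_level_exists[OF tree well_order height xT] by blast
  then have "|tree_pred T le x| =o |underS r c|"
    using card_of_cong Well_order_tree_pred(2)[OF tree xT] Field_Restr_underS[OF well_order]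
    unfolding tree_level_def by fastforce
  then have "|tree_pred T le x| <o r" using card_of_underS[OF card_order c(1)] ordIso_ordLess_trans by blast
  ultimately show ?thesis using ordLeq_ordLess_trans[OF card_of_mono1] by blast
qed

lemma separates_branches:
  assumes B: "B \<in> kappa_branches" and B': "B' \<in> kappa_branches"
  shows "separates vertices comparability_edges (B \<inter> B') B B'"
  unfolding separates_def
proof (intro ballI notI)
  fix u y
  assume u: "u \<in> B - B \<inter> B'" and y: "y \<in> B' - B \<inter> B'"
    and uy: "(u, y) \<in> conn_in comparability_edges (vertices - B \<inter> B')"
  note le = is_treeD[OF tree]
  \<comment> \<open>The nodes above B - B' avoid B', and they are closed under edges avoiding B \<inter> B'.\<close>
  define D where "D = {v. \<exists>u0\<in>B - B'. (u0, v) \<in> le}"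
  have "u \<in> D" using u kappa_branchD(3)[OF B] le(2) unfolding D_def refl_on_def by blast
  moreover have "w \<in> D"
    if v: "v \<in> D" and vw: "(v, w) \<in> adj comparability_edges" and w: "w \<in> vertices - B \<inter> B'"
    for v w
  proof -
    obtain u0 where u0: "u0 \<in> B - B'" "(u0, v) \<in> le" using v unfolding D_def by blast
    have "(v, w) \<in> le \<or> (w, v) \<in> le" using vw adj_comparability_edges by blast
    moreover have "w \<in> D" if "(w, v) \<in> le"
    proof -
      have "(u0, w) \<in> le \<or> (w, u0) \<in> le" using tree_le_below_comparable[OF tree u0(2) that] .
      moreover have "w \<in> D" if "(w, u0) \<in> le"
      proof -
        have "w \<in> B" using branch_downward_closed[OF tree kappa_branchD(1)[OF B] _ that] u0(1) by blast
        then have "w \<in> B - B'" "(w, w) \<in> le"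
          using w kappa_branchD(3)[OF B] le(2) unfolding refl_on_def by auto
        then show ?thesis unfolding D_def by blast
      qed
      ultimately show ?thesis using u0(1) unfolding D_def by blast
    qed
    ultimately show ?thesis using u0 le(4) unfolding D_def trans_def by blast
  qed
  ultimately have "y \<in> D" using conn_in_closed[OF _ uy] by blast
  then obtain u0 where "u0 \<in> B - B'" "(u0, y) \<in> le" unfolding D_def by blast
  then show False using branch_downward_closed[OF tree kappa_branchD(1)[OF B'], of y u0] y by blast
qed

definition singleton_minors :: "'a set set set" where
  "singleton_minors = (\<lambda>B. (\<lambda>x. {x}) ` B) ` kappa_branches"

lemma kurepa_minor_family_singleton_minors:
  "kurepa_minor_family r vertices comparability_edges singleton_minors"
  unfolding kurepa_minor_family_def
proof (intro conjI ballI impI)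
  fix M assume "M \<in> singleton_minors"
  then obtain B where B: "B \<in> kappa_branches" "M = (\<lambda>x. {x}) ` B" unfolding singleton_minors_def by blast
  have "B \<subseteq> vertices" using B(1) unfolding vertices_def by blast
  then show "K_minor r vertices comparability_edges M"
    using K_minor_singletons kappa_branchD(4)[OF B(1)] branch_vertices_adjacent[OF B(1)] B(2) by blast
next
  fix M N assume "M \<in> singleton_minors" "N \<in> singleton_minors" "M \<noteq> N"
  then obtain B B' where B: "B \<in> kappa_branches" "B' \<in> kappa_branches" "B \<noteq> B'"
    and MN: "\<Union>M = B" "\<Union>N = B'"
    unfolding singleton_minors_def by blast
  obtain x where x: "x \<in> B" "x \<notin> B'"
  proof (rule ccontr)
    assume "\<not> thesis"
    then have "B \<subseteq> B'" using that by blast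
    then have "B' = B" using kappa_branchD(1)[OF B(1)] kappa_branchD(1)[OF B(2)] unfolding is_branch_def by blast
    then show False using B(3) by simp
  qed
  have "B \<inter> B' \<subseteq> vertices" using B(1) unfolding vertices_def by blast
  then show "\<exists>S. S \<subseteq> vertices \<and> |S| <o r \<and> separates vertices comparability_edges S (\<Union>M) (\<Union>N)"
    using card_of_branch_Int_ordLess[OF B(1,2) x] separates_branches[OF B(1,2)] MN by blast
qed

lemma card_of_singleton_minors: "cardSuc r \<le>o |singleton_minors|"
proof -
  have "\<Union>((\<lambda>x. {x}) ` B) = B" for B :: "'a set" by blast
  then have "inj_on (\<lambda>B. (\<lambda>x. {x}) ` B) kappa_branches" by (metis inj_onI)
  then have "|kappa_branches| =o |singleton_minors|"
    unfolding singleton_minors_def using card_of_ordIso bij_betw_imageI by blast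
  then show ?thesis using ordLeq_ordIso_trans[OF many_branches] by blast
qed

end

lemma kurepa_tree_imp_kurepa_minor_graph:
  fixes r :: "'b rel" and T :: "'a set"
  assumes "Card_order r" "infinite (Field r)" "kurepa_tree r T le"
  shows "\<exists>(V :: 'a set) (E :: 'a set set) (F :: 'a set set set).
           is_graph V E \<and> |V| =o r \<and> kl_connected r r V E \<and>
           kurepa_minor_family r V E F \<and> cardSuc r \<le>o |F|"
proof -
  interpret kurepa_tree_graph r T le using assms by unfold_locales
  show ?thesis
    using is_graph_comparability card_of_vertices kl_connected_comparability
      kurepa_minor_family_singleton_minors card_of_singleton_minors by blast
qed

section \<open>From a graph to a Kurepa tree\<close>

locale kurepa_minor_graph =
  fixes r :: "'b rel" and V :: "'a set" and E :: "'a set set" and F :: "'a set set set"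
    and g :: "'b \<Rightarrow> 'a"
  assumes card_order: "Card_order r" and infinite: "infinite (Field r)"
    and regular: "regularCard r"
    and connected: "kl_connected r r V E" and minor_family: "kurepa_minor_family r V E F"
    and many_minors: "cardSuc r \<le>o |F|" and enumeration: "bij_betw g (Field r) V"
begin

definition vertices_below :: "'b \<Rightarrow> 'a set" where
  "vertices_below \<alpha> = g ` underS r \<alpha>"

definition avoiding :: "'a set set \<Rightarrow> 'b \<Rightarrow> 'a set set" where
  "avoiding W \<alpha> = {X \<in> W. X \<inter> vertices_below \<alpha> = {}}"

definition minor_component :: "'a set set \<Rightarrow> 'b \<Rightarrow> 'a set" where
  "minor_component W \<alpha> =
     {y. \<exists>X\<in>avoiding W \<alpha>. \<exists>x\<in>X. (x, y) \<in> conn_in E (V - vertices_below \<alpha>)}"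

lemma well_order: "Well_order r"
  using card_order_on_well_order_on card_order by blast

lemma order: "refl_on (Field r) r" "trans r" "antisym r" "total_on (Field r) r"
  using well_order unfolding order_on_defs by auto

lemma vertices_below_subset: "vertices_below \<alpha> \<subseteq> V"
proof -
  have "g ` underS r \<alpha> \<subseteq> g ` Field r" by (rule image_mono[OF Order_Relation.underS_Field])
  then show ?thesis using enumeration unfolding vertices_below_def bij_betw_def by simp
qed

lemma card_of_vertices_below: "\<alpha> \<in> Field r \<Longrightarrow> |vertices_below \<alpha>| <o r"
  unfolding vertices_below_def using ordLeq_ordLess_trans[OF card_of_image card_of_underS[OF card_order]] by blast

lemma vertices_below_mono: "(\<alpha>, \<alpha>') \<in> r \<Longrightarrow> vertices_below \<alpha> \<subseteq> vertices_below \<alpha>'"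
  unfolding vertices_below_def using underS_incr[OF order(2,3)] by (rule image_mono)

lemma K_minor_of_family: "W \<in> F \<Longrightarrow> K_minor r V E W"
  using minor_family unfolding kurepa_minor_family_def by blast

lemma small_components: "\<alpha> \<in> Field r \<Longrightarrow> |components E (V - vertices_below \<alpha>)| <o r"
  using connected vertices_below_subset card_of_vertices_below unfolding kl_connected_def by blast

lemma avoiding_nonempty:
  assumes W: "W \<in> F" and \<alpha>: "\<alpha> \<in> Field r"
  shows "avoiding W \<alpha> \<noteq> {}"
proof
  assume none: "avoiding W \<alpha> = {}"
  have W_card: "|W| =o r" and disjoint: "\<forall>A\<in>W. \<forall>B\<in>W. A \<noteq> B \<longrightarrow> A \<inter> B = {}"
    using K_minor_of_family[OF W] unfolding K_minor_def by auto
  define pick where "pick X = (SOME v. v \<in> X \<inter> vertices_below \<alpha>)" for X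
  have pick: "pick X \<in> X \<inter> vertices_below \<alpha>" if "X \<in> W" for X
  proof -
    have "X \<inter> vertices_below \<alpha> \<noteq> {}" using none that unfolding avoiding_def by blast
    then show ?thesis unfolding pick_def by (metis ex_in_conv someI_ex)
  qed
  have "inj_on pick W"
  proof (rule inj_onI)
    fix X Y assume X: "X \<in> W" and Y: "Y \<in> W" and eq: "pick X = pick Y"
    have "pick X \<in> X \<inter> Y" using pick[OF X] pick[OF Y] eq by auto
    then show "X = Y" using disjoint X Y by blast
  qed
  moreover have "pick ` W \<subseteq> vertices_below \<alpha>" using pick by blast
  ultimately have "|W| \<le>o |vertices_below \<alpha>|" using card_of_ordLeq[of W "vertices_below \<alpha>"] by blast
  then have "|W| <o r" using ordLeq_ordLess_trans[OF _ card_of_vertices_below[OF \<alpha>]] by blast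
  then show False using W_card not_ordLess_ordIso by blast
qed

lemma minor_component_eq_class:
  assumes W: "W \<in> F" and \<alpha>: "\<alpha> \<in> Field r"
  obtains x0 where "x0 \<in> V - vertices_below \<alpha>"
    and "minor_component W \<alpha> = conn_in E (V - vertices_below \<alpha>) `` {x0}"
proof -
  let ?U = "V - vertices_below \<alpha>"
  have minor: "K_minor r V E W" using K_minor_of_family[OF W] .
  have avoiding_sub: "X \<in> W \<and> X \<subseteq> ?U" if "X \<in> avoiding W \<alpha>" for X
    using that minor unfolding avoiding_def K_minor_def by blast
  obtain X0 where X0: "X0 \<in> avoiding W \<alpha>" using avoiding_nonempty[OF W \<alpha>] by blast
  then have "induces_connected E X0" using avoiding_sub minor unfolding K_minor_def by blast
  then obtain x0 where x0: "x0 \<in> X0" unfolding induces_connected_def by blast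
  have "minor_component W \<alpha> = conn_in E ?U `` {x0}"
  proof
    show "minor_component W \<alpha> \<subseteq> conn_in E ?U `` {x0}"
    proof
      fix y assume "y \<in> minor_component W \<alpha>"
      then obtain X x where X: "X \<in> avoiding W \<alpha>" "x \<in> X" "(x, y) \<in> conn_in E ?U"
        unfolding minor_component_def by blast
      have "(x0, x) \<in> conn_in E ?U"
        using K_minor_conn_in[OF minor conjunct1[OF avoiding_sub[OF X0]] conjunct2[OF avoiding_sub[OF X0]]
            x0 conjunct1[OF avoiding_sub[OF X(1)]] conjunct2[OF avoiding_sub[OF X(1)]] X(2)] .
      then show "y \<in> conn_in E ?U `` {x0}" using conn_in_trans[OF _ X(3)] by blast
    qed
    show "conn_in E ?U `` {x0} \<subseteq> minor_component W \<alpha>"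
      using X0 x0 unfolding minor_component_def by blast
  qed
  then show thesis using that x0 avoiding_sub[OF X0] by blast
qed

lemma minor_component_in_components:
  "W \<in> F \<Longrightarrow> \<alpha> \<in> Field r \<Longrightarrow> minor_component W \<alpha> \<in> components E (V - vertices_below \<alpha>)"
  by (metis minor_component_eq_class component_of)

lemma minor_component_nonempty: "W \<in> F \<Longrightarrow> \<alpha> \<in> Field r \<Longrightarrow> minor_component W \<alpha> \<noteq> {}"
  using minor_component_in_components component_nonempty by blast

lemma minor_component_eq_if_Int:
  "W \<in> F \<Longrightarrow> W' \<in> F \<Longrightarrow> \<alpha> \<in> Field r \<Longrightarrow>
    minor_component W \<alpha> \<inter> minor_component W' \<alpha> \<noteq> {} \<Longrightarrow> minor_component W \<alpha> = minor_component W' \<alpha>"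
  using minor_component_in_components components_disjoint by blast

lemma minor_component_antimono:
  assumes "(\<alpha>, \<alpha>') \<in> r" shows "minor_component W \<alpha>' \<subseteq> minor_component W \<alpha>"
proof -
  have below: "vertices_below \<alpha> \<subseteq> vertices_below \<alpha>'" using vertices_below_mono[OF assms] .
  then have "avoiding W \<alpha>' \<subseteq> avoiding W \<alpha>" unfolding avoiding_def by blast
  moreover have "conn_in E (V - vertices_below \<alpha>') \<subseteq> conn_in E (V - vertices_below \<alpha>)"
    using below by (intro conn_in_mono) blast
  ultimately show ?thesis unfolding minor_component_def by blast
qed

lemma minor_component_distinct:
  assumes W: "W \<in> F" and W': "W' \<in> F" and ne: "W \<noteq> W'"
  shows "\<exists>\<alpha>\<in>Field r. minor_component W \<alpha> \<noteq> minor_component W' \<alpha>"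
proof -
  obtain S where SV: "S \<subseteq> V" and S_small: "|S| <o r" and sep: "separates V E S (\<Union>W) (\<Union>W')"
    using minor_family W W' ne unfolding kurepa_minor_family_def by blast
  define K where "K = inv_into (Field r) g ` S"
  have gK: "g ` K = S"
    using SV enumeration unfolding K_def bij_betw_def by (simp add: image_inv_into_cancel)
  have "K \<subseteq> Field r" using SV enumeration unfolding K_def bij_betw_def by (auto intro: inv_into_into)
  moreover have "|K| <o r" unfolding K_def using ordLeq_ordLess_trans[OF card_of_image S_small] .
  ultimately obtain \<alpha> where \<alpha>: "\<alpha> \<in> Field r" "K \<subseteq> underS r \<alpha>"
    using regularCard_small_set_bounded[OF card_order infinite regular] by blast
  then have S_below: "S \<subseteq> vertices_below \<alpha>" using gK unfolding vertices_below_def by blast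
  have "minor_component W \<alpha> \<noteq> minor_component W' \<alpha>"
  proof
    assume eq: "minor_component W \<alpha> = minor_component W' \<alpha>"
    obtain X where X: "X \<in> avoiding W \<alpha>" using avoiding_nonempty[OF W \<alpha>(1)] by blast
    have "induces_connected E X" "X \<subseteq> V"
      using X K_minor_of_family[OF W] unfolding avoiding_def K_minor_def by auto
    then obtain x where x: "x \<in> X" "x \<in> V - vertices_below \<alpha>"
      using X unfolding induces_connected_def avoiding_def by blast
    then have "x \<in> minor_component W \<alpha>"
      using X conn_in_refl[OF x(2)] unfolding minor_component_def by blast
    then have "x \<in> minor_component W' \<alpha>" using eq by simp
    then obtain Y y where Y: "Y \<in> avoiding W' \<alpha>" "y \<in> Y" "(y, x) \<in> conn_in E (V - vertices_below \<alpha>)"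
      unfolding minor_component_def by blast
    have "(x, y) \<in> conn_in E (V - S)"
      using conn_in_mono[of "V - vertices_below \<alpha>" "V - S"] S_below conn_in_sym[OF Y(3)] by blast
    moreover have "x \<in> \<Union>W - S" "y \<in> \<Union>W' - S"
      using x X Y S_below unfolding avoiding_def by blast+
    ultimately show False using sep unfolding separates_def by blast
  qed
  then show ?thesis using \<alpha>(1) by blast
qed

definition node :: "'a set set \<Rightarrow> 'b \<Rightarrow> 'b \<times> 'a set" where
  "node W \<alpha> = (\<alpha>, minor_component W \<alpha>)"

definition minor_tree :: "('b \<times> 'a set) set" where
  "minor_tree = {node W \<alpha> | W \<alpha>. W \<in> F \<and> \<alpha> \<in> Field r}"

definition minor_tree_le :: "('b \<times> 'a set) rel" where
  "minor_tree_le = {(p, q). p \<in> minor_tree \<and> q \<in> minor_tree \<and> (fst p, fst q) \<in> r \<and> snd q \<subseteq> snd p}"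

lemma node_in_minor_tree: "W \<in> F \<Longrightarrow> \<alpha> \<in> Field r \<Longrightarrow> node W \<alpha> \<in> minor_tree"
  unfolding minor_tree_def by blast

lemma minor_treeE:
  assumes "p \<in> minor_tree"
  obtains W \<alpha> where "W \<in> F" "\<alpha> \<in> Field r" "p = node W \<alpha>"
  using assms unfolding minor_tree_def by blast

lemma fst_node [simp]: "fst (node W \<alpha>) = \<alpha>" and snd_node [simp]: "snd (node W \<alpha>) = minor_component W \<alpha>"
  unfolding node_def by auto

lemma inj_on_node: "inj_on (node W) A"
  unfolding inj_on_def node_def by auto

lemma node_le:
  assumes "W \<in> F" "\<alpha> \<in> Field r" "\<beta> \<in> Field r" "(\<alpha>, \<beta>) \<in> r"
  shows "(node W \<alpha>, node W \<beta>) \<in> minor_tree_le"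
  using assms node_in_minor_tree minor_component_antimono[OF assms(4)] unfolding minor_tree_le_def by simp

lemma minor_tree_le_node:
  assumes W: "W \<in> F" and \<alpha>: "\<alpha> \<in> Field r" and q: "(q, node W \<alpha>) \<in> minor_tree_le"
  shows "q = node W (fst q)"
proof -
  obtain W' \<gamma> where W': "W' \<in> F" "\<gamma> \<in> Field r" "q = node W' \<gamma>"
    using q unfolding minor_tree_le_def by (auto elim: minor_treeE)
  have "(\<gamma>, \<alpha>) \<in> r" and "minor_component W \<alpha> \<subseteq> minor_component W' \<gamma>"
    using q W'(3) unfolding minor_tree_le_def by auto
  moreover have "minor_component W \<alpha> \<subseteq> minor_component W \<gamma>"
    using minor_component_antimono[OF calculation(1)] .
  ultimately have "minor_component W' \<gamma> \<inter> minor_component W \<gamma> \<noteq> {}"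
    using minor_component_nonempty[OF W \<alpha>] by blast
  then show ?thesis using minor_component_eq_if_Int[OF W'(1) W W'(2)] W'(3) unfolding node_def by simp
qed

lemma Restr_minor_tree_le_node_image:
  assumes W: "W \<in> F" and A: "A \<subseteq> Field r"
  shows "Restr minor_tree_le (node W ` A) = dir_image (Restr r A) (node W)"
proof
  show "Restr minor_tree_le (node W ` A) \<subseteq> dir_image (Restr r A) (node W)"
  proof (rule subrelI)
    fix p q assume pq: "(p, q) \<in> Restr minor_tree_le (node W ` A)"
    then obtain \<alpha> \<beta> where \<alpha>\<beta>: "\<alpha> \<in> A" "\<beta> \<in> A" "p = node W \<alpha>" "q = node W \<beta>" by blast
    then have "(\<alpha>, \<beta>) \<in> r" using pq unfolding minor_tree_le_def by auto
    then show "(p, q) \<in> dir_image (Restr r A) (node W)" using \<alpha>\<beta> unfolding dir_image_def by blast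
  qed
  show "dir_image (Restr r A) (node W) \<subseteq> Restr minor_tree_le (node W ` A)"
  proof (rule subrelI)
    fix p q assume "(p, q) \<in> dir_image (Restr r A) (node W)"
    then obtain \<alpha> \<beta> where \<alpha>\<beta>: "\<alpha> \<in> A" "\<beta> \<in> A" "(\<alpha>, \<beta>) \<in> r" "p = node W \<alpha>" "q = node W \<beta>"
      unfolding dir_image_def by blast
    then have "(node W \<alpha>, node W \<beta>) \<in> minor_tree_le" using node_le[OF W] A by blast
    then show "(p, q) \<in> Restr minor_tree_le (node W ` A)" using \<alpha>\<beta> by blast
  qed
qed

lemma tree_pred_node:
  assumes W: "W \<in> F" and \<alpha>: "\<alpha> \<in> Field r"
  shows "tree_pred minor_tree minor_tree_le (node W \<alpha>) = node W ` underS r \<alpha>"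
proof
  show "node W ` underS r \<alpha> \<subseteq> tree_pred minor_tree minor_tree_le (node W \<alpha>)"
  proof
    fix q assume "q \<in> node W ` underS r \<alpha>"
    then obtain \<gamma> where \<gamma>: "\<gamma> \<in> underS r \<alpha>" "q = node W \<gamma>" by blast
    have "\<gamma> \<in> Field r" using underS_Field[OF \<gamma>(1)] .
    moreover have "(\<gamma>, \<alpha>) \<in> r" "\<gamma> \<noteq> \<alpha>" using \<gamma>(1) unfolding underS_def by auto
    ultimately show "q \<in> tree_pred minor_tree minor_tree_le (node W \<alpha>)"
      using node_le[OF W _ \<alpha>] node_in_minor_tree[OF W] \<gamma>(2) unfolding tree_pred_def node_def by auto
  qed
  show "tree_pred minor_tree minor_tree_le (node W \<alpha>) \<subseteq> node W ` underS r \<alpha>"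
  proof
    fix q assume "q \<in> tree_pred minor_tree minor_tree_le (node W \<alpha>)"
    then have q: "(q, node W \<alpha>) \<in> minor_tree_le" "q \<noteq> node W \<alpha>" unfolding tree_pred_def by auto
    then have q_eq: "q = node W (fst q)" using minor_tree_le_node[OF W \<alpha>] by blast
    moreover have "(fst q, \<alpha>) \<in> r" using q(1) unfolding minor_tree_le_def by auto
    moreover have "fst q \<noteq> \<alpha>" using q(2) q_eq by auto
    ultimately show "q \<in> node W ` underS r \<alpha>" unfolding underS_def by blast
  qed
qed

lemma tree_pred_node_ordIso:
  assumes W: "W \<in> F" and \<alpha>: "\<alpha> \<in> Field r"
  shows "Restr minor_tree_le (tree_pred minor_tree minor_tree_le (node W \<alpha>)) =o Restr r (underS r \<alpha>)"
    and "Well_order (Restr minor_tree_le (tree_pred minor_tree minor_tree_le (node W \<alpha>)))"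
    and "Field (Restr minor_tree_le (tree_pred minor_tree minor_tree_le (node W \<alpha>)))
           = tree_pred minor_tree minor_tree_le (node W \<alpha>)"
proof -
  have eq: "Restr minor_tree_le (tree_pred minor_tree minor_tree_le (node W \<alpha>))
      = dir_image (Restr r (underS r \<alpha>)) (node W)"
    using tree_pred_node[OF W \<alpha>] Restr_minor_tree_le_node_image[OF W Order_Relation.underS_Field] by simp
  have WO: "Well_order (Restr r (underS r \<alpha>))" using Well_order_Restr[OF well_order] .
  show "Restr minor_tree_le (tree_pred minor_tree minor_tree_le (node W \<alpha>)) =o Restr r (underS r \<alpha>)"
    using eq ordIso_symmetric[OF dir_image_ordIso[OF WO inj_on_node]] by simp
  show "Well_order (Restr minor_tree_le (tree_pred minor_tree minor_tree_le (node W \<alpha>)))"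
    using eq Well_order_dir_image[OF WO inj_on_node] by simp
  show "Field (Restr minor_tree_le (tree_pred minor_tree minor_tree_le (node W \<alpha>)))
      = tree_pred minor_tree minor_tree_le (node W \<alpha>)"
    using eq dir_image_Field[of "Restr r (underS r \<alpha>)" "node W"] Field_Restr_underS[OF well_order]
      tree_pred_node[OF W \<alpha>] by simp
qed

lemma is_tree_minor_tree: "is_tree minor_tree minor_tree_le"
  unfolding is_tree_def
proof (intro conjI ballI)
  show "minor_tree_le \<subseteq> minor_tree \<times> minor_tree" unfolding minor_tree_le_def by auto
  show "refl_on minor_tree minor_tree_le"
    unfolding refl_on_def minor_tree_le_def
    using order(1) unfolding refl_on_def by (auto elim: minor_treeE)
  show "antisym minor_tree_le"
    using order(3) unfolding antisym_def minor_tree_le_def by (auto simp: prod_eq_iff)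
  show "trans minor_tree_le"
    using order(2) unfolding trans_def minor_tree_le_def by blast
  fix t assume "t \<in> minor_tree"
  then obtain W \<alpha> where "W \<in> F" "\<alpha> \<in> Field r" "t = node W \<alpha>" by (rule minor_treeE)
  then show "well_order_on (tree_pred minor_tree minor_tree_le t)
      (Restr minor_tree_le (tree_pred minor_tree minor_tree_le t))"
    using tree_pred_node_ordIso(2,3) by simp
qed

lemma tree_pred_minor_tree_ordIso:
  assumes "t \<in> minor_tree"
  shows "Restr minor_tree_le (tree_pred minor_tree minor_tree_le t) =o Restr r (underS r (fst t))"
  using assms tree_pred_node_ordIso(1) by (auto elim: minor_treeE)

lemma tree_level_minor_tree:
  assumes \<beta>: "\<beta> \<in> Field r"
  shows "tree_level minor_tree minor_tree_le (Restr r (underS r \<beta>)) = {p \<in> minor_tree. fst p = \<beta>}"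
proof -
  have "Restr r (underS r (fst p)) =o Restr r (underS r \<beta>) \<longleftrightarrow> fst p = \<beta>"
    if "p \<in> minor_tree" for p
    using that Restr_underS_ordIso_imp_eq[OF well_order _ \<beta>] ordIso_reflexive[OF Well_order_Restr[OF well_order]]
    by (auto elim: minor_treeE)
  then show ?thesis
    using tree_pred_minor_tree_ordIso ordIso_transitive ordIso_symmetric
    unfolding tree_level_def by blast
qed

lemma tree_level_minor_tree_height: "tree_level minor_tree minor_tree_le r = {}"
proof -
  have "\<not> Restr r (underS r \<alpha>) =o r" for \<alpha>
    using underS_Restr_ordLess[OF well_order] infinite not_ordLess_ordIso by force
  then show ?thesis
    using tree_pred_minor_tree_ordIso ordIso_transitive ordIso_symmetric
    unfolding tree_level_def by blast
qed

lemma card_of_tree_level_minor_tree: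
  assumes \<beta>: "\<beta> \<in> Field r"
  shows "|tree_level minor_tree minor_tree_le (Restr r (underS r \<beta>))| <o r"
proof -
  have "{p \<in> minor_tree. fst p = \<beta>} \<subseteq> Pair \<beta> ` components E (V - vertices_below \<beta>)"
  proof
    fix p assume p: "p \<in> {p \<in> minor_tree. fst p = \<beta>}"
    then obtain W \<alpha> where "W \<in> F" "p = node W \<alpha>" by (auto elim: minor_treeE)
    moreover have "\<alpha> = \<beta>" using p calculation(2) by simp
    ultimately show "p \<in> Pair \<beta> ` components E (V - vertices_below \<beta>)"
      using minor_component_in_components[OF _ \<beta>] unfolding node_def by blast
  qed
  then have "|{p \<in> minor_tree. fst p = \<beta>}| \<le>o |components E (V - vertices_below \<beta>)|"
    using ordLeq_transitive[OF card_of_mono1 card_of_image] by blast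
  then show ?thesis
    using ordLeq_ordLess_trans[OF _ small_components[OF \<beta>]] tree_level_minor_tree[OF \<beta>] by simp
qed

lemma is_chain_node_image:
  assumes W: "W \<in> F"
  shows "is_chain minor_tree minor_tree_le (node W ` Field r)"
  unfolding is_chain_def
proof (intro conjI ballI)
  show "node W ` Field r \<subseteq> minor_tree" using node_in_minor_tree[OF W] by blast
  fix p q assume "p \<in> node W ` Field r" "q \<in> node W ` Field r"
  then obtain \<alpha> \<beta> where \<alpha>\<beta>: "\<alpha> \<in> Field r" "\<beta> \<in> Field r" "p = node W \<alpha>" "q = node W \<beta>" by blast
  have "(\<alpha>, \<beta>) \<in> r \<or> (\<beta>, \<alpha>) \<in> r"
    using order(1,4) \<alpha>\<beta>(1,2) unfolding refl_on_def total_on_def by metis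
  then show "(p, q) \<in> minor_tree_le \<or> (q, p) \<in> minor_tree_le" using node_le[OF W] \<alpha>\<beta> by blast
qed

lemma branch_node_image:
  assumes W: "W \<in> F"
  shows "is_branch minor_tree minor_tree_le (node W ` Field r)"
    and "Restr minor_tree_le (node W ` Field r) =o r"
proof -
  have "Restr minor_tree_le (node W ` Field r) = dir_image r (node W)"
    using Restr_minor_tree_le_node_image[OF W subset_refl] Restr_Field[of r] by simp
  then show "Restr minor_tree_le (node W ` Field r) =o r"
    using ordIso_symmetric[OF dir_image_ordIso[OF well_order inj_on_node]] by simp
  have "C = node W ` Field r"
    if C: "is_chain minor_tree minor_tree_le C" "node W ` Field r \<subseteq> C" for C
  proof
    show "C \<subseteq> node W ` Field r"
    proof
      fix q assume q: "q \<in> C"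
      then have "q \<in> minor_tree" using C(1) unfolding is_chain_def by blast
      then obtain W' where W': "W' \<in> F" "q = node W' (fst q)" and \<gamma>: "fst q \<in> Field r"
        by (auto elim: minor_treeE)
      have "node W (fst q) \<in> C" using C(2) \<gamma> by blast
      then have "(q, node W (fst q)) \<in> minor_tree_le \<or> (node W (fst q), node W' (fst q)) \<in> minor_tree_le"
        using q C(1) W'(2) unfolding is_chain_def by metis
      then have "q = node W (fst q)"
        using minor_tree_le_node[OF W \<gamma>] minor_tree_le_node[OF W'(1) \<gamma>] W'(2) by fastforce
      then show "q \<in> node W ` Field r" using \<gamma> by blast
    qed
  qed (use C in blast)
  then show "is_branch minor_tree minor_tree_le (node W ` Field r)"
    using is_chain_node_image[OF W] unfolding is_branch_def by blast
qed

lemma kurepa_tree_minor_tree: "kurepa_tree r minor_tree minor_tree_le"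
  unfolding kurepa_tree_def tree_height_is_def
proof (intro conjI ballI)
  show "is_tree minor_tree minor_tree_le" by (rule is_tree_minor_tree)
  show "tree_level minor_tree minor_tree_le r = {}" by (rule tree_level_minor_tree_height)
  fix \<alpha> assume \<alpha>: "\<alpha> \<in> Field r"
  obtain W where W: "W \<in> F" using nonempty_if_cardSuc_ordLeq[OF card_order many_minors] by blast
  show "tree_level minor_tree minor_tree_le (Restr r (underS r \<alpha>)) \<noteq> {}"
  proof -
    have "node W \<alpha> \<in> {p \<in> minor_tree. fst p = \<alpha>}" using node_in_minor_tree[OF W \<alpha>] by simp
    then show ?thesis using tree_level_minor_tree[OF \<alpha>] by blast
  qed
  show "|tree_level minor_tree minor_tree_le (Restr r (underS r \<alpha>))| <o r"
    using card_of_tree_level_minor_tree[OF \<alpha>] .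
next
  let ?Bs = "{B. is_branch minor_tree minor_tree_le B \<and> Restr minor_tree_le B =o r}"
  have "inj_on (\<lambda>W. node W ` Field r) F"
  proof (rule inj_onI)
    fix W W' assume W: "W \<in> F" "W' \<in> F" and eq: "node W ` Field r = node W' ` Field r"
    show "W = W'"
    proof (rule ccontr)
      assume "W \<noteq> W'"
      then obtain \<alpha> where \<alpha>: "\<alpha> \<in> Field r" "minor_component W \<alpha> \<noteq> minor_component W' \<alpha>"
        using minor_component_distinct[OF W] by blast
      have "node W \<alpha> \<in> node W' ` Field r" using eq \<alpha>(1) by blast
      then show False using \<alpha>(2) unfolding node_def by auto
    qed
  qed
  moreover have "(\<lambda>W. node W ` Field r) ` F \<subseteq> ?Bs" using branch_node_image by blast
  ultimately have "|F| \<le>o |?Bs|" using card_of_ordLeq[of F ?Bs] by blast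
  then show "cardSuc r \<le>o |?Bs|" using ordLeq_transitive[OF many_minors] by blast
qed

lemma card_of_minor_tree: "|minor_tree| \<le>o |Field r|"
  using card_of_tree_ordLeq[OF card_order infinite] kurepa_tree_minor_tree
  unfolding kurepa_tree_def tree_height_is_def by blast

end

lemma kurepa_minor_graph_imp_kurepa_tree:
  fixes r :: "'b rel" and V :: "'a set"
  assumes C: "Card_order r" and "infinite (Field r)" "regularCard r"
    and V: "|V| =o r" and "kl_connected r r V E" "kurepa_minor_family r V E F" "cardSuc r \<le>o |F|"
  shows "\<exists>(T :: 'b set) (le :: 'b rel). kurepa_tree r T le"
proof -
  have "|Field r| =o |V|" using ordIso_transitive[OF card_of_Field_ordIso[OF C] ordIso_symmetric[OF V]] .
  then obtain g where "bij_betw g (Field r) V" using card_of_ordIso by blast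
  then interpret kurepa_minor_graph r V E F g using assms by unfold_locales
  \<comment> \<open>The tree lives on pairs; having at most \<kappa> nodes, it can be renamed into the type of r.\<close>
  obtain f :: "'b \<times> 'a set \<Rightarrow> 'b" where "inj_on f minor_tree"
    using card_of_minor_tree card_of_ordLeq[of minor_tree "Field r"] by blast
  then show ?thesis using kurepa_tree_inj_image[OF is_tree_minor_tree _ kurepa_tree_minor_tree] by blast
qed

theorem mainTheorem12:
  fixes r :: "'a rel"
  assumes "Card_order r" and "infinite (Field r)" and "regularCard r"
  shows "(\<exists>(T :: 'a set) (le :: 'a rel). kurepa_tree r T le) \<longleftrightarrow>
         (\<exists>(V :: 'a set) (E :: 'a set set) (F :: 'a set set set).
             is_graph V E \<and> (card_of V, r) \<in> ordIso \<and> kl_connected r r V E \<and>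
             kurepa_minor_family r V E F \<and> (cardSuc r, card_of F) \<in> ordLeq)"
  using kurepa_tree_imp_kurepa_minor_graph[OF assms(1,2)]
    kurepa_minor_graph_imp_kurepa_tree[OF assms] by blast

end
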